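(* Every unicellular fatgraph $\mathbb{G}$ of (Euler) genus $g$ satisfies $d(\mathbb{G})\ge g$.
   Context: A (rooted) fatgraph with $n$ ribbons is $\mathbb{G}=([2n+1],\sigma,\gamma,\omega)$: sectors $[2n+1]$; permutations $\sigma,\gamma$ whose cycles are vertices and boundary components, $\sigma(2n+1)=\gamma(2n+1)=1$; orientations $\omega:[2n+1]\to\{\pm1\}$ with $\omega(1)=\omega(2n+1)$; the pairs $(x,\sigma(x))$, $x\ne2n+1$, are matched into ribbons $((x,\sigma(x)),(y,\sigma(y)))$, untwisted ($x,\sigma(y)$ and $\sigma(x),y$ $\gamma$-consecutive, $\omega(x)=\omega(\sigma(y))$, $\omega(\sigma(x))=\omega(y)$) or twisted ($x,y$ and $\sigma(x),\sigma(y)$ $\gamma$-consecutive, $\omega(x)=-\omega(y)$, $\omega(\sigma(x))=-\omega(\sigma(y))$). Flipping a vertex reverses its cyclic order and negates its sectors' orientations. Euler genus: $2-g=v-e+b$ ($v$ vertices, $e$ ribbons, $b$ boundary components). Unicellular: $\gamma=(1,\dots,2n+1)$ with order $<_\gamma$. Reversals for sectors $i<_\gamma j$: gluing (distinct vertices $(i,i_1,\dots,i_p),(j,j_1,\dots,j_q)$, after flipping $\omega(i)=-\omega(j)$, become $(i,j_1,\dots,j_q,j,i_1,\dots,i_p)$); slicing (vertex $(i,j_1,\dots,j_q,j,i_1,\dots,i_p)$ with $\omega(i)=-\omega(j)$ becomes $(i,i_1,\dots,i_p)$, $(j,j_1,\dots,j_q)$); half-flipping (same vertex with $\omega(i)=\omega(j)$: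 split, flip $(j,j_1,\dots,j_q)$, glue back along $i,j$, giving $(i,j_q,\dots,j_1,j,i_1,\dots,i_p)$). The r-distance $d(\mathbb{G})$ is the minimum number of reversals transforming $\mathbb{G}$ into a unicellular fatgraph of genus $0$ (a plane tree). *)

theory Defs
  imports "HOL-Combinatorics.Permutations" "HOL-Library.Extended_Nat"
begin

text \<open>A rooted fatgraph with n ribbons: sectors {1..2n+1}, vertex permutation sigma,
 boundary permutation gamma, orientations omega with values +1/-1.\<close>

record fatgraph =
  nrib :: nat
  sig  :: "nat \<Rightarrow> nat"
  gam  :: "nat \<Rightarrow> nat"
  ome  :: "nat \<Rightarrow> int"

definition sectors :: "fatgraph \<Rightarrow> nat set" where
  "sectors G = {1..2 * nrib G + 1}"

definition gcons :: "(nat \<Rightarrow> nat) \<Rightarrow> nat \<Rightarrow> nat \<Rightarrow> bool" where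
  "gcons g a b \<longleftrightarrow> g a = b \<or> g b = a"

text \<open>Ribbon formed by the pairs (x, sigma x) and (y, sigma y).\<close>
definition untwisted_ribbon :: "fatgraph \<Rightarrow> nat \<Rightarrow> nat \<Rightarrow> bool" where
  "untwisted_ribbon G x y \<longleftrightarrow>
     gcons (gam G) x (sig G y) \<and> gcons (gam G) (sig G x) y \<and>
     ome G x = ome G (sig G y) \<and> ome G (sig G x) = ome G y"

definition twisted_ribbon :: "fatgraph \<Rightarrow> nat \<Rightarrow> nat \<Rightarrow> bool" where
  "twisted_ribbon G x y \<longleftrightarrow>
     gcons (gam G) x y \<and> gcons (gam G) (sig G x) (sig G y) \<and>
     ome G x = - ome G y \<and> ome G (sig G x) = - ome G (sig G y)"

text \<open>The pairs (x, sigma x), x in {1..2n} (i.e. x \<noteq> 2n+1), are matched into ribbons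
  by a fixed-point-free involution rho on {1..2n}.\<close>
definition is_fatgraph :: "fatgraph \<Rightarrow> bool" where
  "is_fatgraph G \<longleftrightarrow>
     (let n = nrib G; S = sectors G in
       sig G permutes S \<and> gam G permutes S \<and>
       sig G (2 * n + 1) = 1 \<and> gam G (2 * n + 1) = 1 \<and>
       (\<forall>x\<in>S. ome G x = 1 \<or> ome G x = -1) \<and>
       ome G 1 = ome G (2 * n + 1) \<and>
       (\<exists>rho :: nat \<Rightarrow> nat.
          (\<forall>x\<in>{1..2 * n}. rho x \<in> {1..2 * n} \<and> rho x \<noteq> x \<and> rho (rho x) = x \<and>
             (untwisted_ribbon G x (rho x) \<or> twisted_ribbon G x (rho x)))))"

definition cyc :: "(nat \<Rightarrow> nat) \<Rightarrow> nat \<Rightarrow> nat set" where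
  "cyc f x = {(f ^^ k) x | k. True}"

definition num_vertices :: "fatgraph \<Rightarrow> nat" where
  "num_vertices G = card (cyc (sig G) ` sectors G)"

definition num_boundaries :: "fatgraph \<Rightarrow> nat" where
  "num_boundaries G = card (cyc (gam G) ` sectors G)"

definition euler_genus :: "fatgraph \<Rightarrow> int" where
  "euler_genus G = 2 - int (num_vertices G) + int (nrib G) - int (num_boundaries G)"

definition unicellular :: "fatgraph \<Rightarrow> bool" where
  "unicellular G \<longleftrightarrow>
     gam G = (\<lambda>x. if x \<in> sectors G then (if x = 2 * nrib G + 1 then 1 else x + 1) else x)"

text \<open>Order along the boundary cycle starting at sector 1 (for unicellular G this is
  the order of 1 < 2 < ... < 2n+1).\<close>
definition gamma_less :: "fatgraph \<Rightarrow> nat \<Rightarrow> nat \<Rightarrow> bool" where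
  "gamma_less G i j \<longleftrightarrow>
     (\<exists>m k. m < k \<and> k \<le> 2 * nrib G \<and> i = (gam G ^^ m) 1 \<and> j = (gam G ^^ k) 1)"

definition flip_vertex :: "nat set \<Rightarrow> fatgraph \<Rightarrow> fatgraph" where
  "flip_vertex C G = G\<lparr> sig := (\<lambda>x. if x \<in> C then inv (sig G) x else sig G x),
                        ome := (\<lambda>x. if x \<in> C then - ome G x else ome G x) \<rparr>"

definition flip_if :: "bool \<Rightarrow> nat \<Rightarrow> fatgraph \<Rightarrow> fatgraph" where
  "flip_if b x G = (if b then flip_vertex (cyc (sig G) x) G else G)"

text \<open>Exchange the successors of i and j in sigma: this merges the cycles
  (i,i1..ip),(j,j1..jq) into (i,j1..jq,j,i1..ip), and conversely splits.\<close>
definition swap_succ :: "nat \<Rightarrow> nat \<Rightarrow> fatgraph \<Rightarrow> fatgraph" where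
  "swap_succ i j G = G\<lparr> sig := (sig G)(i := sig G j, j := sig G i) \<rparr>"

definition gluing :: "fatgraph \<Rightarrow> nat \<Rightarrow> nat \<Rightarrow> fatgraph \<Rightarrow> bool" where
  "gluing G i j H \<longleftrightarrow> cyc (sig G) i \<noteq> cyc (sig G) j \<and>
     (\<exists>fi fj. let G1 = flip_if fj j (flip_if fi i G) in
        ome G1 i = - ome G1 j \<and> H = swap_succ i j G1)"

definition slicing :: "fatgraph \<Rightarrow> nat \<Rightarrow> nat \<Rightarrow> fatgraph \<Rightarrow> bool" where
  "slicing G i j H \<longleftrightarrow> cyc (sig G) i = cyc (sig G) j \<and> ome G i = - ome G j \<and>
     H = swap_succ i j G"

definition half_flipping :: "fatgraph \<Rightarrow> nat \<Rightarrow> nat \<Rightarrow> fatgraph \<Rightarrow> bool" where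
  "half_flipping G i j H \<longleftrightarrow> cyc (sig G) i = cyc (sig G) j \<and> ome G i = ome G j \<and>
     H = swap_succ i j (flip_if True j (swap_succ i j G))"

definition reversal :: "fatgraph \<Rightarrow> fatgraph \<Rightarrow> bool" where
  "reversal G H \<longleftrightarrow> is_fatgraph G \<and> is_fatgraph H \<and>
     (\<exists>i\<in>sectors G. \<exists>j\<in>sectors G. gamma_less G i j \<and>
        (gluing G i j H \<or> slicing G i j H \<or> half_flipping G i j H))"

definition plane_tree :: "fatgraph \<Rightarrow> bool" where
  "plane_tree H \<longleftrightarrow> is_fatgraph H \<and> unicellular H \<and> euler_genus H = 0"

text \<open>r-distance: minimal number of reversals to reach a plane tree (\<infinity> if impossible).\<close>
definition r_distance :: "fatgraph \<Rightarrow> enat" where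
  "r_distance G = (INF k \<in> {k. \<exists>H. (reversal ^^ k) G H \<and> plane_tree H}. enat k)"

end

theory Submission
  imports Defs "HOL-Combinatorics.Orbits"
begin

(* A reversal at sectors i and j changes sigma only at i and j, apart from flips, which reverse
   whole vertices and so keep every vertex as a set of sectors. Hence every vertex containing
   neither i nor j survives unchanged, and the number of vertices can only change through the
   one or two vertices containing i or j: it grows by at most one. Ribbons and boundary
   components are untouched, so each reversal lowers the Euler genus by at most one, while a
   plane tree has genus 0. *)

lemma funpow_in_cyc: "(f ^^ k) x \<in> cyc f x"
  unfolding cyc_def by blast

lemma self_in_cyc: "x \<in> cyc f x"
  using funpow_in_cyc[of 0 f x] by simp

lemma cyc_eq_orbit: "permutation f \<Longrightarrow> cyc f x = orbit f x"
  by (simp add: cyc_def orbit_altdef_permutation)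

lemma cyc_subset:
  assumes "x \<in> C" and "\<And>y. y \<in> C \<Longrightarrow> f y \<in> C"
  shows "cyc f x \<subseteq> C"
proof -
  have "(f ^^ k) x \<in> C" for k
    using assms by (induction k) auto
  then show ?thesis
    unfolding cyc_def by blast
qed

lemma cyc_cong:
  assumes "\<And>y. y \<in> cyc f x \<Longrightarrow> g y = f y"
  shows "cyc g x = cyc f x"
proof -
  have "(g ^^ k) x = (f ^^ k) x" for k
    using assms funpow_in_cyc by (induction k) auto
  then show ?thesis
    unfolding cyc_def by simp
qed

lemma cyc_eq_iff:
  assumes "permutation f"
  shows "cyc f x = cyc f y \<longleftrightarrow> y \<in> cyc f x"
  using assms permutation_self_in_orbit[OF assms]
  by (auto simp: cyc_eq_orbit intro: orbit_trans orbit_swap)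

lemma cyc_apply: "permutation f \<Longrightarrow> cyc f (f x) = cyc f x"
  by (simp add: cyc_eq_orbit permutation_orbit_step)

lemma cyc_closed_iff:
  assumes "permutation f"
  shows "f x \<in> cyc f y \<longleftrightarrow> x \<in> cyc f y"
  using cyc_eq_iff[OF assms] cyc_apply[OF assms] by metis

lemma cyc_swap_if_avoids:
  assumes "i \<notin> cyc f x" and "j \<notin> cyc f x"
  shows "cyc (f(i := f j, j := f i)) x = cyc f x"
  by (rule cyc_cong) (use assms in auto)

lemma avoiding_cycles_swap:
  "{C \<in> cyc (f(i := f j, j := f i)) ` S. i \<notin> C \<and> j \<notin> C} = {C \<in> cyc f ` S. i \<notin> C \<and> j \<notin> C}"
proof -
  have sub: "{C \<in> cyc h ` S. i \<notin> C \<and> j \<notin> C} \<subseteq> {C \<in> cyc (h(i := h j, j := h i)) ` S. i \<notin> C \<and> j \<notin> C}"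
    for h :: "nat \<Rightarrow> nat"
  proof safe
    fix x assume "x \<in> S" "i \<notin> cyc h x" "j \<notin> cyc h x"
    then show "cyc h x \<in> cyc (h(i := h j, j := h i)) ` S"
      by (metis cyc_swap_if_avoids image_eqI)
  qed
  define f' where "f' = f(i := f j, j := f i)"
  have "f'(i := f' j, j := f' i) = f"
    unfolding f'_def by (simp add: fun_eq_iff)
  then have "{C \<in> cyc f' ` S. i \<notin> C \<and> j \<notin> C} \<subseteq> {C \<in> cyc f ` S. i \<notin> C \<and> j \<notin> C}"
    using sub[of f'] by simp
  then show ?thesis
    using sub[of f] unfolding f'_def by (rule equalityI)
qed

lemma card_cycles_split:
  assumes "permutation f" and "finite S" and "i \<in> S" and "j \<in> S"
  shows "card (cyc f ` S) = card {C \<in> cyc f ` S. i \<notin> C \<and> j \<notin> C} + card (cyc f ` {i, j})"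
proof -
  let ?A = "{C \<in> cyc f ` S. i \<notin> C \<and> j \<notin> C}"
  have "cyc f x \<in> cyc f ` {i, j}" if "i \<in> cyc f x \<or> j \<in> cyc f x" for x
    using that unfolding cyc_eq_iff[OF assms(1), symmetric] by auto
  then have "cyc f ` S = ?A \<union> cyc f ` {i, j}"
    using assms(3,4) by auto
  then have "card (cyc f ` S) = card (?A \<union> cyc f ` {i, j})"
    by (rule arg_cong)
  also have "\<dots> = card ?A + card (cyc f ` {i, j})"
    by (rule card_Un_disjoint) (use assms(2) self_in_cyc in auto)
  finally show ?thesis .
qed

lemma permutation_swap:
  "permutation f \<Longrightarrow> permutation (f(i := f j, j := f i))"
  unfolding Fun.swap_def[symmetric] by (intro permutation_compose permutation_swap_id)

lemma permutation_flip_on: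
  assumes "permutation f" and "\<And>x. f x \<in> C \<longleftrightarrow> x \<in> C"
  shows "permutation (\<lambda>x. if x \<in> C then inv f x else f x)" (is "permutation ?g")
proof -
  have "bij f"
    using assms(1) by (rule permutation_bijective)
  then have inv_f: "inv f (f x) = x" "f (inv f x) = x" for x
    by (metis bij_is_inj inv_f_f, metis bij_is_surj surj_f_inv_f)
  have inv_C: "inv f x \<in> C \<longleftrightarrow> x \<in> C" for x
    using assms(2)[of "inv f x"] inv_f by simp
  have "bij ?g"
  proof (rule o_bij)
    show "(\<lambda>x. if x \<in> C then f x else inv f x) \<circ> ?g = id"
      by (simp add: fun_eq_iff inv_f inv_C assms(2))
    show "?g \<circ> (\<lambda>x. if x \<in> C then f x else inv f x) = id"
      by (simp add: fun_eq_iff inv_f inv_C assms(2))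
  qed
  moreover have "finite {x. ?g x \<noteq> x}"
  proof (rule finite_subset[OF _ permutation_finite_support[OF assms(1)]])
    have "inv f x = x" if "f x = x" for x
      using inv_f(1)[of x] that by simp
    then show "{x. ?g x \<noteq> x} \<subseteq> {x. f x \<noteq> x}"
      by auto
  qed
  ultimately show ?thesis
    unfolding permutation by simp
qed

lemma cyc_flip_on:
  assumes "permutation f" and "\<And>x. f x \<in> C \<longleftrightarrow> x \<in> C"
  shows "cyc (\<lambda>x. if x \<in> C then inv f x else f x) = cyc f"
proof
  fix x
  have "bij f"
    using assms(1) by (rule permutation_bijective)
  then have inv_C: "inv f y \<in> C \<longleftrightarrow> y \<in> C" for y
    using assms(2)[of "inv f y"] by (metis bij_is_surj surj_f_inv_f)
  show "cyc (\<lambda>x. if x \<in> C then inv f x else f x) x = cyc f x"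
  proof (cases "x \<in> C")
    case True
    then have "cyc (inv f) x \<subseteq> C"
      by (rule cyc_subset) (simp add: inv_C)
    then have "cyc (\<lambda>x. if x \<in> C then inv f x else f x) x = cyc (inv f) x"
      by (intro cyc_cong) auto
    also have "\<dots> = cyc f x"
      using assms(1) by (simp add: cyc_eq_orbit permutation_inverse orbit_inv_eq)
    finally show ?thesis .
  next
    case False
    then have "cyc f x \<subseteq> - C"
      by (intro cyc_subset) (simp_all add: assms(2))
    then show ?thesis
      by (intro cyc_cong) auto
  qed
qed

lemma card_image_pair_bounds: "1 \<le> card (f ` {a, b}) \<and> card (f ` {a, b}) \<le> 2"
  by (cases "f a = f b") simp_all

lemma permutation_sig: "is_fatgraph G \<Longrightarrow> permutation (sig G)"
  unfolding is_fatgraph_def Let_def sectors_def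
  by (metis finite_atLeastAtMost permutes_imp_permutation)

lemma swap_succ_simps [simp]:
  "sig (swap_succ i j G) = (sig G)(i := sig G j, j := sig G i)"
  "nrib (swap_succ i j G) = nrib G"
  "gam (swap_succ i j G) = gam G"
  by (simp_all add: swap_succ_def)

lemma flip_if_simps [simp]:
  "nrib (flip_if b x G) = nrib G"
  "gam (flip_if b x G) = gam G"
  by (simp_all add: flip_if_def flip_vertex_def)

lemma sig_flip_if_cases:
  "sig (flip_if b x G) = (if b then (\<lambda>y. if y \<in> cyc (sig G) x then inv (sig G) y else sig G y) else sig G)"
  by (simp add: flip_if_def flip_vertex_def)

lemma permutation_sig_flip_if:
  "permutation (sig G) \<Longrightarrow> permutation (sig (flip_if b x G))"
  unfolding sig_flip_if_cases by (simp add: permutation_flip_on cyc_closed_iff)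

lemma cyc_sig_flip_if:
  "permutation (sig G) \<Longrightarrow> cyc (sig (flip_if b x G)) = cyc (sig G)"
  unfolding sig_flip_if_cases by (simp add: cyc_flip_on cyc_closed_iff)

definition vertices_avoiding :: "nat \<Rightarrow> nat \<Rightarrow> fatgraph \<Rightarrow> nat set set" where
  "vertices_avoiding i j G = {C \<in> cyc (sig G) ` sectors G. i \<notin> C \<and> j \<notin> C}"

lemma vertices_avoiding_swap_succ [simp]:
  "vertices_avoiding i j (swap_succ i j G) = vertices_avoiding i j G"
  by (simp add: vertices_avoiding_def sectors_def avoiding_cycles_swap)

lemma vertices_avoiding_flip_if [simp]:
  "permutation (sig G) \<Longrightarrow> vertices_avoiding i j (flip_if b x G) = vertices_avoiding i j G"
  by (simp add: vertices_avoiding_def sectors_def cyc_sig_flip_if)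

lemma num_vertices_split:
  assumes "permutation (sig G)" and "i \<in> sectors G" and "j \<in> sectors G"
  shows "num_vertices G = card (vertices_avoiding i j G) + card (cyc (sig G) ` {i, j})"
  unfolding num_vertices_def vertices_avoiding_def
  by (rule card_cycles_split) (use assms in \<open>simp_all add: sectors_def\<close>)

lemma reversal_at_invariants:
  assumes "permutation (sig G)" and "gluing G i j H \<or> slicing G i j H \<or> half_flipping G i j H"
  shows "nrib H = nrib G \<and> gam H = gam G \<and> vertices_avoiding i j H = vertices_avoiding i j G"
  using assms(2)
proof (elim disjE)
  assume "gluing G i j H"
  then obtain fi fj where "H = swap_succ i j (flip_if fj j (flip_if fi i G))"
    unfolding gluing_def Let_def by blast
  then show ?thesis
    using assms(1) by (simp add: permutation_sig_flip_if)
next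
  assume "slicing G i j H"
  then show ?thesis
    unfolding slicing_def by simp
next
  assume "half_flipping G i j H"
  then have "H = swap_succ i j (flip_if True j (swap_succ i j G))"
    unfolding half_flipping_def by blast
  moreover have "permutation (sig (swap_succ i j G))"
    using assms(1) by (simp add: permutation_swap)
  ultimately show ?thesis
    by simp
qed

lemma reversal_nrib_gam:
  assumes "reversal G H"
  shows "nrib H = nrib G \<and> gam H = gam G"
proof -
  obtain i j where "gluing G i j H \<or> slicing G i j H \<or> half_flipping G i j H"
    using assms unfolding reversal_def by blast
  moreover have "permutation (sig G)"
    using assms by (simp add: reversal_def permutation_sig)
  ultimately show ?thesis
    using reversal_at_invariants by blast
qed

lemma num_vertices_reversal:
  assumes "reversal G H"
  shows "num_vertices H \<le> num_vertices G + 1"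
proof -
  obtain i j where ij: "i \<in> sectors G" "j \<in> sectors G"
    and "gluing G i j H \<or> slicing G i j H \<or> half_flipping G i j H"
    using assms unfolding reversal_def by blast
  moreover have perm: "permutation (sig G)" "permutation (sig H)"
    using assms by (simp_all add: reversal_def permutation_sig)
  ultimately have avoid: "vertices_avoiding i j H = vertices_avoiding i j G"
    using reversal_at_invariants by blast
  have "sectors H = sectors G"
    using reversal_nrib_gam[OF assms] by (simp add: sectors_def)
  then show ?thesis
    using num_vertices_split[OF perm(1) ij] num_vertices_split[OF perm(2), of i j] ij avoid
      card_image_pair_bounds[of "cyc (sig G)" i j] card_image_pair_bounds[of "cyc (sig H)" i j]
    by simp
qed

lemma euler_genus_reversal: "reversal G H \<Longrightarrow> euler_genus G \<le> euler_genus H + 1"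
  using reversal_nrib_gam num_vertices_reversal
  by (fastforce simp: euler_genus_def num_boundaries_def sectors_def)

lemma euler_genus_relpowp_reversal:
  "(reversal ^^ k) G H \<Longrightarrow> euler_genus G \<le> euler_genus H + int k"
proof (induction k arbitrary: H)
  case 0
  then show ?case by simp
next
  case (Suc k)
  then obtain K where "(reversal ^^ k) G K" and "reversal K H"
    by (elim relpowp_Suc_E)
  then show ?case
    using Suc.IH euler_genus_reversal by fastforce
qed

theorem corollary1:
  fixes G :: fatgraph and g :: nat
  assumes "is_fatgraph G" and "unicellular G" and "euler_genus G = int g"
  shows "enat g \<le> r_distance G"
  unfolding r_distance_def
proof (rule INF_greatest)
  fix k
  assume "k \<in> {k. \<exists>H. (reversal ^^ k) G H \<and> plane_tree H}"
  then obtain H where "(reversal ^^ k) G H" and "plane_tree H"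
    by blast
  then have "int g \<le> int k"
    using euler_genus_relpowp_reversal assms(3) unfolding plane_tree_def by fastforce
  then show "enat g \<le> enat k"
    by simp
qed

end
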